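(* For every real $x$, the improper Riemann integral below (improper at $t=\pi/2$) converges and $$H_1(x):=1+\int_0^{\pi/2}\left(\frac{x\sec^2 t\, e^{-x\tan t}}{\left(1+e^{-x\tan t}\right)^2}-\frac12 e^{-x^2\tan t}x^2\sec^2 t\right)dt=\begin{cases}0,& x<0,\\ 1,& x\ge 0.\end{cases}$$ *)

theory Defs
  imports "HOL-Analysis.Analysis"
begin

end

theory Submission imports Defs "HOL-Real_Asymp.Real_Asymp" begin

text \<open>Substituting \<open>u = tan t\<close>, the integrand is the derivative of \<open>G (tan t)\<close>, where
  \<open>G u = 1 / (1 + exp (- x u)) + exp (- x\<^sup>2 u) / 2\<close>. Hence the integral over \<open>[0, b]\<close> is
  \<open>G (tan b) - G 0 = G (tan b) - 1\<close>, and as \<open>b \<rightarrow> \<pi>/2\<close> this tends to \<open>lim G - 1\<close>: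
  the logistic term tends to \<open>1\<close> or \<open>0\<close> according to the sign of \<open>x\<close>, while the Gaussian
  term vanishes for \<open>x \<noteq> 0\<close> and contributes exactly the missing \<open>1/2\<close> when \<open>x = 0\<close>.\<close>

definition logistic_gauss_primitive :: "real \<Rightarrow> real \<Rightarrow> real" where
  "logistic_gauss_primitive x u = inverse (1 + exp (- x * u)) + 1/2 * exp (- (x\<^sup>2) * u)"

lemma logistic_gauss_primitive_0 [simp]: "logistic_gauss_primitive x 0 = 1"
  by (simp add: logistic_gauss_primitive_def)

lemma logistic_gauss_primitive_has_real_derivative:
  "(logistic_gauss_primitive x has_real_derivative
     x * exp (- x * u) / (1 + exp (- x * u))\<^sup>2 - 1/2 * exp (- (x\<^sup>2) * u) * x\<^sup>2) (at u)"
proof -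
  have denom_nonzero: "1 + exp v \<noteq> 0" for v :: real
    by (smt (verit) exp_gt_zero)
  show ?thesis
    unfolding logistic_gauss_primitive_def
    by (rule derivative_eq_intros refl denom_nonzero)+
       (simp add: field_simps power2_eq_square denom_nonzero)
qed

lemma logistic_gauss_primitive_tendsto_at_top:
  "(logistic_gauss_primitive x \<longlongrightarrow> (if x < 0 then 0 else 1)) at_top"
proof -
  consider "x < 0" | "x = 0" | "x > 0" by linarith
  then show ?thesis
  proof cases
    case 1
    then have "x\<^sup>2 > 0" by simp
    have "((\<lambda>u. inverse (1 + exp (- x * u))) \<longlongrightarrow> 0) at_top"
      using 1 by real_asymp
    moreover have "((\<lambda>u. 1/2 * exp (- (x\<^sup>2) * u)) \<longlongrightarrow> 0) at_top"
      using \<open>x\<^sup>2 > 0\<close> by real_asymp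
    ultimately have "(logistic_gauss_primitive x \<longlongrightarrow> 0 + 0) at_top"
      unfolding logistic_gauss_primitive_def by (rule tendsto_add)
    with 1 show ?thesis by simp
  next
    case 2
    then show ?thesis unfolding logistic_gauss_primitive_def by simp
  next
    case 3
    then show ?thesis
      unfolding logistic_gauss_primitive_def by simp real_asymp
  qed
qed

lemma improper_integral_at_left_from_primitive:
  fixes F f :: "real \<Rightarrow> real"
  assumes deriv: "\<And>t. t \<in> {a..<c} \<Longrightarrow> (F has_real_derivative f t) (at t)"
    and lim: "(F \<longlongrightarrow> M) (at_left c)" and "a < c"
  shows "\<forall>b\<in>{a..<c}. (f has_integral F b - F a) {a..b}"
    and "((\<lambda>b. integral {a..b} f) \<longlongrightarrow> M - F a) (at_left c)"
proof -
  show int: "\<forall>b\<in>{a..<c}. (f has_integral F b - F a) {a..b}"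
  proof
    fix b assume b: "b \<in> {a..<c}"
    show "(f has_integral F b - F a) {a..b}"
    proof (rule fundamental_theorem_of_calculus)
      show "a \<le> b" using b by simp
      fix t assume "t \<in> {a..b}"
      with b have "t \<in> {a..<c}" by simp
      then have "(F has_real_derivative f t) (at t)" by (rule deriv)
      then show "(F has_vector_derivative f t) (at t within {a..b})"
        by (simp add: has_real_derivative_iff_has_vector_derivative has_vector_derivative_at_within)
    qed
  qed
  have "eventually (\<lambda>b. b \<in> {a<..<c}) (at_left c)"
    using \<open>a < c\<close> by (intro eventually_at_left_real)
  then have primitive: "eventually (\<lambda>b. F b - F a = integral {a..b} f) (at_left c)"
  proof eventually_elim
    case (elim b)
    then have "b \<in> {a..<c}" by simp
    with int have "(f has_integral F b - F a) {a..b}" by blast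
    then show ?case by (rule integral_unique[symmetric])
  qed
  have "((\<lambda>b. F b - F a) \<longlongrightarrow> M - F a) (at_left c)"
    using lim by (rule tendsto_diff[OF _ tendsto_const])
  then show "((\<lambda>b. integral {a..b} f) \<longlongrightarrow> M - F a) (at_left c)"
    using primitive by (rule Lim_transform_eventually)
qed

theorem mainTheorem6:
  fixes x :: real
  defines "f \<equiv> (\<lambda>t::real. x * (1 / (cos t)\<^sup>2) * exp (- x * tan t) / (1 + exp (- x * tan t))\<^sup>2
                    - 1/2 * exp (- (x\<^sup>2) * tan t) * x\<^sup>2 * (1 / (cos t)\<^sup>2))"
  shows "(\<forall>b\<in>{0..<pi/2}. f integrable_on {0..b}) \<and>
         (\<exists>L. ((\<lambda>b. integral {0..b} f) \<longlongrightarrow> L) (at_left (pi/2)) \<and>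
              1 + L = (if x < 0 then 0 else 1))"
proof -
  define F where "F = (\<lambda>t. logistic_gauss_primitive x (tan t))"
  define M where "M = (if x < 0 then 0 else (1::real))"
  have deriv: "(F has_real_derivative f t) (at t)" if "t \<in> {0..<pi/2}" for t
  proof -
    have "cos t \<noteq> 0"
      using that by (intro order.strict_implies_not_eq[symmetric] cos_gt_zero_pi) auto
    from DERIV_chain2[OF logistic_gauss_primitive_has_real_derivative DERIV_tan[OF this]]
    show ?thesis
      unfolding F_def f_def by (rule DERIV_cong) (simp add: divide_simps)
  qed
  have lim: "(F \<longlongrightarrow> M) (at_left (pi/2))"
    unfolding F_def M_def
    by (rule filterlim_compose[OF logistic_gauss_primitive_tendsto_at_top filterlim_tan_at_left])
  note improper = improper_integral_at_left_from_primitive[of 0 "pi/2", OF deriv lim]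
  have "F 0 = 1" by (simp add: F_def)
  with improper show ?thesis
    by (auto simp: M_def)
qed

end
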